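(* For all even integers $n\ge2$ and real numbers $a\ge1$, $x\in(0,\pi)$, we have $S_{n,a}(x)\ge 2\sin(x)(1+\cos(x))$. Equality holds if and only if $n=2$, $a=1$ (any $x$), or $n=4$, $a=1$, $x=\pi/2$.
   Context: For a real number $a$ and integers $0\le m$, $\binom{m+a}{m}=\frac{(a+1)(a+2)\cdots(a+m)}{m!}$ (equal to $1$ when $m=0$). For an integer $n\ge1$, $S_{n,a}(x)=\sum_{j=1}^n\binom{n+a-j}{n-j}\sin(jx)$. *)

theory Defs
  imports "HOL-Analysis.Analysis"
begin

text \<open>binom_shift m a = binom(m+a, m) = (a+1)(a+2)...(a+m)/m!\<close>
definition binom_shift :: "nat \<Rightarrow> real \<Rightarrow> real" where
  "binom_shift m a = (\<Prod>i=1..m. a + real i) / fact m"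

definition S :: "nat \<Rightarrow> real \<Rightarrow> real \<Rightarrow> real" where
  "S n a x = (\<Sum>j=1..n. binom_shift (n - j) a * sin (real j * x))"

end

theory Submission
  imports Defs "HOL-Computational_Algebra.Formal_Power_Series"
begin

(* Since sum_k binom(k+a, k) t^k = (1-t)^-(a+1), the sum S_{n,a}(x) is the n-th coefficient of
   (1-t)^-(a+1) * sum_j sin(jx) t^j.  Splitting off the factor (1-t)^-2 writes S_{n,a} as
   sum_i binom(i+a-2, i) S_{n-i,1}; the coefficients are 1 for i = 0, nonnegative for a >= 1,
   positive for a > 1, and zero for i >= 1 when a = 1.  Summing sin(jx) twice gives
   2 (1 - cos x) S_{q,1}(x) = (q+1) sin x - sin((q+1)x), which is positive for q >= 1 because
   |sin(kx)| < k sin x for k >= 2 and 0 < x < pi.  Hence S_{n,a} >= S_{n,1}, with equality iff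
   a = 1.  For n = 2m+2 the same closed form gives
   (1 - cos x) (S_{n,1} - S_{2,1}) = m sin x - cos((m+3)x) sin(mx) >= 0,
   which vanishes only for m = 0, or for m = 1 and cos 4x = 1; and S_{2,1}(x) = 2 sin x (1 + cos x). *)

lemma binom_shift_eq_gbinomial: "binom_shift m a = (a + real m) gchoose m"
proof -
  have "(\<Prod>i=1..m. a + real i) = pochhammer (a + 1) m"
    by (simp add: pochhammer_prod prod.atLeast1_atMost_eq atLeast0LessThan ac_simps)
  then show ?thesis
    by (simp add: binom_shift_def gbinomial_pochhammer')
qed

lemma binom_shift_0 [simp]: "binom_shift 0 a = 1"
  by (simp add: binom_shift_def)

lemma binom_shift_Suc_Suc:
  "binom_shift (Suc k) a = binom_shift k a + binom_shift (Suc k) (a - 1)"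
  using gbinomial_Suc_Suc[of "a + real k"] by (simp add: binom_shift_eq_gbinomial ac_simps)

lemma binom_shift_minus_one: "binom_shift k (- 1) = (if k = 0 then 1 else 0)"
  by (auto simp: binom_shift_def intro: prod_zero bexI[of _ 1])

lemma binom_shift_pos: "a > - 1 \<Longrightarrow> binom_shift k a > 0"
  unfolding binom_shift_def by (intro divide_pos_pos prod_pos) auto

lemma binom_shift_nonneg: "a \<ge> - 1 \<Longrightarrow> binom_shift k a \<ge> 0"
  unfolding binom_shift_def by (intro divide_nonneg_pos prod_nonneg) auto

(* The power series of (1 - X) ^ -(a + 1). *)
definition binom_shift_fps :: "real \<Rightarrow> real fps" where
  "binom_shift_fps a = Abs_fps (\<lambda>k. binom_shift k a)"

lemma binom_shift_fps_times_one_minus_X: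
  "binom_shift_fps a * (1 - fps_X) = binom_shift_fps (a - 1)"
proof (rule fps_ext)
  fix n
  show "fps_nth (binom_shift_fps a * (1 - fps_X)) n = fps_nth (binom_shift_fps (a - 1)) n"
    using binom_shift_Suc_Suc[of "n - 1" a]
    by (cases n) (simp_all add: binom_shift_fps_def right_diff_distrib)
qed

lemma binom_shift_fps_times_one_minus_X_power:
  "binom_shift_fps a * (1 - fps_X) ^ k = binom_shift_fps (a - real k)"
  by (induction k arbitrary: a)
     (simp_all add: binom_shift_fps_times_one_minus_X mult.assoc[symmetric] diff_diff_add add.commute)

lemma binom_shift_fps_minus_one: "binom_shift_fps (- 1) = 1"
  by (rule fps_ext) (simp add: binom_shift_fps_def binom_shift_minus_one)

lemma binom_shift_fps_add:
  "binom_shift_fps (a + real k + 1) = binom_shift_fps a * binom_shift_fps (real k)"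
proof -
  have "binom_shift_fps (real k) * (1 - fps_X) ^ Suc k = 1"
    using binom_shift_fps_times_one_minus_X_power[of "real k" "Suc k"]
    by (simp add: binom_shift_fps_minus_one)
  moreover have "binom_shift_fps (a + real k + 1) * (1 - fps_X) ^ Suc k = binom_shift_fps a"
    using binom_shift_fps_times_one_minus_X_power[of "a + real k + 1" "Suc k"] by simp
  ultimately show ?thesis
    by (metis (no_types) mult.assoc mult.commute mult_1_right)
qed

lemma S_eq_fps_nth:
  "S n a x = fps_nth (binom_shift_fps a * Abs_fps (\<lambda>j. sin (real j * x))) n"
proof -
  have "fps_nth (binom_shift_fps a * Abs_fps (\<lambda>j. sin (real j * x))) n
      = (\<Sum>i\<in>{0..<n}. binom_shift i a * sin (real (n - i) * x))"
    by (simp add: fps_mult_nth binom_shift_fps_def atLeastLessThanSuc_atLeastAtMost[symmetric])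
  also have "\<dots> = S n a x"
    unfolding S_def by (rule sum.reindex_bij_witness[of _ "\<lambda>j. n - j" "\<lambda>i. n - i"]) auto
  finally show ?thesis ..
qed

lemma S_Suc: "S (Suc n) a x = S n a x + S (Suc n) (a - 1) x"
proof -
  define f where "f = binom_shift_fps a * Abs_fps (\<lambda>j. sin (real j * x))"
  have "binom_shift_fps (a - 1) * Abs_fps (\<lambda>j. sin (real j * x)) = f - fps_X * f"
    by (simp add: f_def flip: binom_shift_fps_times_one_minus_X) (simp add: algebra_simps)
  then show ?thesis
    by (simp add: S_eq_fps_nth f_def)
qed

lemma S_minus_one: "S n (- 1) x = sin (real n * x)"
  by (simp add: S_eq_fps_nth binom_shift_fps_minus_one)

lemma S_convolution:
  "S n (a + real k + 1) x = (\<Sum>i=0..n. binom_shift i a * S (n - i) (real k) x)"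
  by (simp add: S_eq_fps_nth binom_shift_fps_add mult.assoc fps_mult_nth[of "binom_shift_fps a"])
     (simp add: binom_shift_fps_def)

lemma S_zero_closed_form:
  "2 * (1 - cos x) * S n 0 x = sin x + sin (real n * x) - sin (real (Suc n) * x)"
proof (induction n)
  case 0
  then show ?case by (simp add: S_def)
next
  case (Suc n)
  have "sin (real (Suc (Suc n)) * x) + sin (real n * x)
      = sin (real (Suc n) * x + x) + sin (real (Suc n) * x - x)"
    by (simp add: algebra_simps)
  also have "\<dots> = 2 * cos x * sin (real (Suc n) * x)"
    by (simp add: sin_add sin_diff)
  finally have "2 * cos x * sin (real (Suc n) * x) = sin (real (Suc (Suc n)) * x) + sin (real n * x)" ..
  then show ?case
    using Suc.IH S_Suc[of n 0 x] S_minus_one[of "Suc n" x] by (simp add: algebra_simps)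
qed

lemma S_one_closed_form:
  "2 * (1 - cos x) * S n 1 x = real (Suc n) * sin x - sin (real (Suc n) * x)"
proof (induction n)
  case 0
  then show ?case by (simp add: S_def)
next
  case (Suc n)
  then show ?case
    using S_Suc[of n 1 x] S_zero_closed_form[of x "Suc n"] by (simp add: algebra_simps)
qed

lemma abs_cos_less_one: "0 < x \<Longrightarrow> x < pi \<Longrightarrow> \<bar>cos x\<bar> < 1"
  using cos_monotone_0_pi[of 0 x] cos_monotone_0_pi[of x pi] by auto

lemma cos_mult_le_abs: "cos y * z \<le> \<bar>z :: real\<bar>"
proof -
  have "cos y * z \<le> \<bar>cos y * z\<bar>"
    by (rule abs_ge_self)
  also have "\<dots> \<le> \<bar>z\<bar>"
    by (simp add: abs_mult mult_left_le_one_le)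
  finally show ?thesis .
qed

lemma abs_sin_Suc_mult_le:
  "\<bar>sin (real (Suc n) * x)\<bar> \<le> \<bar>sin (real n * x)\<bar> * \<bar>cos x\<bar> + \<bar>sin x\<bar>"
proof -
  have "sin (real (Suc n) * x) = sin (real n * x) * cos x + cos (real n * x) * sin x"
    by (simp add: distrib_right sin_add)
  then have "\<bar>sin (real (Suc n) * x)\<bar> \<le> \<bar>sin (real n * x)\<bar> * \<bar>cos x\<bar> + \<bar>cos (real n * x)\<bar> * \<bar>sin x\<bar>"
    using abs_triangle_ineq[of "sin (real n * x) * cos x" "cos (real n * x) * sin x"]
    by (simp add: abs_mult)
  also have "\<dots> \<le> \<bar>sin (real n * x)\<bar> * \<bar>cos x\<bar> + \<bar>sin x\<bar>"
    by (simp add: mult_left_le_one_le)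
  finally show ?thesis .
qed

lemma abs_sin_mult_le: "\<bar>sin (real n * x)\<bar> \<le> real n * \<bar>sin x\<bar>"
proof (induction n)
  case (Suc n)
  have "\<bar>sin (real n * x)\<bar> * \<bar>cos x\<bar> \<le> \<bar>sin (real n * x)\<bar>"
    by (simp add: mult_right_le_one_le)
  then show ?case
    using Suc.IH abs_sin_Suc_mult_le[of n x] by (simp add: algebra_simps)
qed simp

lemma abs_sin_mult_less:
  assumes "0 < x" "x < pi" "2 \<le> n"
  shows "\<bar>sin (real n * x)\<bar> < real n * sin x"
proof -
  obtain k where n: "n = Suc k" and k: "1 \<le> k"
    using assms(3) by (cases n) auto
  have "sin x > 0"
    using assms sin_gt_zero by blast
  have "\<bar>sin (real k * x)\<bar> * \<bar>cos x\<bar> \<le> real k * sin x * \<bar>cos x\<bar>"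
    using abs_sin_mult_le[of k x] \<open>sin x > 0\<close> by (simp add: mult_right_mono)
  also have "\<dots> < real k * sin x"
    using abs_cos_less_one[OF assms(1,2)] \<open>sin x > 0\<close> k by simp
  finally have "\<bar>sin (real k * x)\<bar> * \<bar>cos x\<bar> < real k * sin x" .
  then show ?thesis
    using abs_sin_Suc_mult_le[of k x] \<open>sin x > 0\<close> n by (simp add: algebra_simps)
qed

lemma S_one_pos:
  assumes "0 < x" "x < pi" "1 \<le> n"
  shows "S n 1 x > 0"
proof -
  have "\<bar>sin (real (Suc n) * x)\<bar> < real (Suc n) * sin x"
    using abs_sin_mult_less[of x "Suc n"] assms by simp
  then have "2 * (1 - cos x) * S n 1 x > 0"
    unfolding S_one_closed_form by linarith
  moreover have "1 - cos x > 0"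
    using abs_cos_less_one[OF assms(1,2)] by linarith
  ultimately show ?thesis
    by (simp add: zero_less_mult_iff)
qed

lemma S_one_nonneg: "0 < x \<Longrightarrow> x < pi \<Longrightarrow> S n 1 x \<ge> 0"
  using S_one_pos[of x n] by (cases n) (auto simp: S_def)

lemma S_minus_S_one:
  "S n a x - S n 1 x = (\<Sum>i=1..n. binom_shift i (a - 2) * S (n - i) 1 x)"
  using S_convolution[of n "a - 2" 1 x]
  by (simp add: sum.atLeast_Suc_atMost binom_shift_def)

lemma S_one_le_S:
  assumes "1 \<le> a" "0 < x" "x < pi"
  shows "S n 1 x \<le> S n a x"
proof -
  have "(\<Sum>i=1..n. binom_shift i (a - 2) * S (n - i) 1 x) \<ge> 0"
    using assms by (intro sum_nonneg mult_nonneg_nonneg binom_shift_nonneg S_one_nonneg) auto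
  then show ?thesis
    using S_minus_S_one[of n a x] by simp
qed

lemma S_one_less_S:
  assumes "1 < a" "0 < x" "x < pi" "2 \<le> n"
  shows "S n 1 x < S n a x"
proof -
  let ?t = "\<lambda>i. binom_shift i (a - 2) * S (n - i) 1 x"
  have "0 < ?t 1"
    using assms by (intro mult_pos_pos binom_shift_pos S_one_pos) auto
  also have "\<dots> \<le> (\<Sum>i=1..n. ?t i)"
    using assms by (intro member_le_sum mult_nonneg_nonneg binom_shift_nonneg S_one_nonneg) auto
  finally show ?thesis
    using S_minus_S_one[of n a x] by simp
qed

lemma S_one_two: "S 2 1 x = 2 * sin x * (1 + cos x)"
proof -
  have "S 2 1 x = 2 * sin x + sin (2 * x)"
    by (simp add: S_def binom_shift_def numeral_2_eq_2)
  then show ?thesis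
    unfolding sin_double by (simp add: algebra_simps)
qed

lemma cos_four_times_eq_one_iff:
  assumes "0 < x" "x < pi"
  shows "cos (4 * x) = 1 \<longleftrightarrow> x = pi / 2"
proof
  assume "cos (4 * x) = 1"
  then obtain k :: int where k: "4 * x = real_of_int k * 2 * pi"
    by (auto simp: cos_one_2pi_int)
  then have "2 * x = pi * real_of_int k"
    by simp
  then have "0 < pi * real_of_int k" "pi * real_of_int k < pi * 2"
    using assms by linarith+
  then have "0 < k" "k < 2"
    by (simp_all add: zero_less_mult_iff)
  then have "k = 1" by linarith
  then show "x = pi / 2" using k by simp
next
  assume "x = pi / 2"
  then have "4 * x = 2 * pi" by simp
  then show "cos (4 * x) = 1" by (simp only: cos_two_pi)
qed

lemma S_one_even_diff:
  "(1 - cos x) * (S (2 * m + 2) 1 x - S 2 1 x)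
     = real m * sin x - cos ((real m + 3) * x) * sin (real m * x)"
proof -
  have "sin ((2 * real m + 3) * x) - sin (3 * x) = 2 * cos ((real m + 3) * x) * sin (real m * x)"
    using cos_times_sin[of "(real m + 3) * x" "real m * x"] by (simp add: algebra_simps)
  then show ?thesis
    using S_one_closed_form[of x "2 * m + 2"] S_one_closed_form[of x 2]
    by (simp add: algebra_simps)
qed

lemma S_one_two_le_even:
  assumes "0 < x" "x < pi"
  shows "S 2 1 x \<le> S (2 * m + 2) 1 x
    \<and> (S (2 * m + 2) 1 x = S 2 1 x \<longleftrightarrow> m = 0 \<or> (m = 1 \<and> x = pi / 2))"
proof -
  define D where "D = real m * sin x - cos ((real m + 3) * x) * sin (real m * x)"
  have "sin x > 0"
    using assms sin_gt_zero by blast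
  have "1 - cos x > 0"
    using abs_cos_less_one[OF assms] by linarith
  note cos_mult_le = cos_mult_le_abs[of "(real m + 3) * x" "sin (real m * x)"]
  have "\<bar>sin (real m * x)\<bar> \<le> real m * sin x"
    using abs_sin_mult_le[of m x] \<open>sin x > 0\<close> by simp
  then have "D \<ge> 0"
    using cos_mult_le unfolding D_def by linarith
  have "D = 0 \<longleftrightarrow> m = 0 \<or> (m = 1 \<and> x = pi / 2)"
  proof (cases "2 \<le> m")
    case True
    then have "D > 0"
      using abs_sin_mult_less[OF assms True] cos_mult_le unfolding D_def by linarith
    then show ?thesis
      using True by simp
  next
    case False
    then consider "m = 0" | "m = 1" by linarith
    then show ?thesis
    proof cases
      case 2
      then have "D = (1 - cos (4 * x)) * sin x"
        by (simp add: D_def algebra_simps)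
      then have "D = 0 \<longleftrightarrow> cos (4 * x) = 1"
        using \<open>sin x > 0\<close> by simp
      then show ?thesis
        using 2 cos_four_times_eq_one_iff[OF assms] by simp
    qed (simp add: D_def)
  qed
  moreover have "(1 - cos x) * (S (2 * m + 2) 1 x - S 2 1 x) = D"
    unfolding D_def by (rule S_one_even_diff)
  ultimately show ?thesis
    using \<open>D \<ge> 0\<close> \<open>1 - cos x > 0\<close> by (auto simp: zero_le_mult_iff)
qed

theorem theorem3p2:
  fixes n :: nat and a x :: real
  assumes "even n" and "n \<ge> 2" and "a \<ge> 1" and "0 < x" and "x < pi"
  shows "S n a x \<ge> 2 * sin x * (1 + cos x)
         \<and> (S n a x = 2 * sin x * (1 + cos x) \<longleftrightarrow>
              (n = 2 \<and> a = 1) \<or> (n = 4 \<and> a = 1 \<and> x = pi / 2))"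
proof -
  define m where "m = n div 2 - 1"
  have n: "n = 2 * m + 2"
    using assms(1,2) unfolding m_def by presburger
  have a_le: "S n 1 x \<le> S n a x"
    using S_one_le_S assms(3-5) .
  have a_eq: "S n a x = S n 1 x \<longleftrightarrow> a = 1"
    using S_one_less_S[of a x n] assms(2-5) by force
  have n_le: "S 2 1 x \<le> S n 1 x"
    and n_eq: "S n 1 x = S 2 1 x \<longleftrightarrow> m = 0 \<or> (m = 1 \<and> x = pi / 2)"
    unfolding n using S_one_two_le_even[OF assms(4,5)] by auto
  have "S n a x = S 2 1 x \<longleftrightarrow> S n a x = S n 1 x \<and> S n 1 x = S 2 1 x"
    using a_le n_le by linarith
  moreover have "m = 0 \<longleftrightarrow> n = 2" "m = 1 \<longleftrightarrow> n = 4"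
    using n by auto
  ultimately show ?thesis
    using a_le n_le a_eq n_eq unfolding S_one_two[symmetric] by auto
qed

end
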